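(* Let $K$ be the fractal percolation on $[0,1]$ with parameters $M\in\mathbb{N}_{\geq2}$ and $p\in(0,1]$, $D=\log(Mp)/\log M$, $r=1/M$, and $\overline{\mathcal V}_k(K):=\lim_{n\to\infty}r^{n(D-k)}\mathbb{E}V_k(K_n)$ for $k=0,1$. Then these limits exist and $$\overline{\mathcal V}_1(K)=1,\qquad \overline{\mathcal V}_0(K)=\frac{M(1-p)}{M-p}.$$
   Context: Fractal percolation on $[0,1]$: $K_0=[0,1]$; given $K_{n-1}$, a union of closed grid intervals of length $M^{-(n-1)}$, each is divided into $M$ closed subintervals of length $M^{-n}$, each kept independently (of everything else) with probability $p$; $K_n$ is the union of kept subintervals. $V_1$ is length and $V_0$ the number of connected components. *)

theory Defs
  imports "HOL-Analysis.Analysis" "HOL-Probability.Probability"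
begin

text \<open>Each nonempty word carries an independent Bernoulli(p) coin (omega ds); the
  interval of word ds is kept in K_n iff the coins of all its nonempty prefixes are True.\<close>

definition fp_words :: "nat \<Rightarrow> nat \<Rightarrow> nat list set" where
  "fp_words M n = {ds. length ds = n \<and> set ds \<subseteq> {..<M}}"

definition fp_left :: "nat \<Rightarrow> nat list \<Rightarrow> real" where
  "fp_left M ds = (\<Sum>i<length ds. real (ds ! i) / real M ^ Suc i)"

definition fp_cell :: "nat \<Rightarrow> nat list \<Rightarrow> real set" where
  "fp_cell M ds = {fp_left M ds .. fp_left M ds + 1 / real M ^ length ds}"

definition fp_kept :: "(nat list \<Rightarrow> bool) \<Rightarrow> nat list \<Rightarrow> bool" where
  "fp_kept \<omega> ds = (\<forall>k\<in>{1..length ds}. \<omega> (take k ds))"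

definition fp_K :: "nat \<Rightarrow> (nat list \<Rightarrow> bool) \<Rightarrow> nat \<Rightarrow> real set" where
  "fp_K M \<omega> n = \<Union> {fp_cell M ds | ds. ds \<in> fp_words M n \<and> fp_kept \<omega> ds}"

definition fp_space :: "real \<Rightarrow> (nat list \<Rightarrow> bool) measure" where
  "fp_space p = (\<Pi>\<^sub>M ds\<in>(UNIV :: nat list set). measure_pmf (bernoulli_pmf p))"

definition V1 :: "real set \<Rightarrow> real" where
  "V1 S = measure lborel S"

definition V0 :: "real set \<Rightarrow> real" where
  "V0 S = real (card (components S))"

end

theory Submission
  imports Defs
begin

text \<open>Number the cells of level n from left to right by 0 \<le> i < M^n; the word of cell i is
  the n-digit base-M expansion of i, and the cell is kept iff the n coins on the nonempty
  prefixes of that word all come up True, which has probability p^n. Hence E V1(K_n) = p^n.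
  Adjacent kept cells meet in a point and non-adjacent ones are disjoint, so V0(K_n) is the
  number of kept cells minus the number of adjacent kept pairs. Two adjacent cells whose words
  first differ in digit k+1 share exactly k coins, so both are kept with probability
  p^(2n-k); splitting the pairs by their leading digit gives the recursion
  G(n+1) = M p G(n) + (M-1) p^(2(n+1)) for the expected number G(n) of adjacent kept pairs, and
  E V0(K_n) = (M p)^n (1 - (M-1) ((p/M) + ... + (p/M)^n)).
  Since r^(n(D-k)) = (M^k/(M p))^n, both limits follow from the geometric series.\<close>

lemma prob_space_fp_space: "prob_space (fp_space p)"
  unfolding fp_space_def by (intro prob_space_PiM prob_space_measure_pmf)

lemma
  assumes "finite S" and "0 \<le> p" and "p \<le> 1"
  shows integrable_all_coins: "integrable (fp_space p) (\<lambda>\<omega>. of_bool (\<forall>s\<in>S. \<omega> s) :: real)"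
    and integral_all_coins: "(\<integral>\<omega>. of_bool (\<forall>s\<in>S. \<omega> s) \<partial>fp_space p) = p ^ card S"
proof -
  interpret prob_space "fp_space p" by (rule prob_space_fp_space)
  let ?B = "\<lambda>_::nat list. measure_pmf (bernoulli_pmf p)"
  define E where "E = prod_emb UNIV ?B S (\<Pi>\<^sub>E s\<in>S. {True})"
  have E_sets: "E \<in> sets (fp_space p)"
    unfolding fp_space_def E_def by (intro measurable_prod_emb sets_PiM_I_finite assms) auto
  have of_bool_eq: "(\<lambda>\<omega>. of_bool (\<forall>s\<in>S. \<omega> s) :: real) = indicator E"
    by (auto simp: E_def prod_emb_iff space_PiM PiE_iff indicator_def fun_eq_iff)
  have "emeasure (fp_space p) E = (\<Prod>s\<in>S. emeasure (?B s) {True})"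
    unfolding fp_space_def E_def
    by (rule emeasure_PiM_emb) (auto simp: assms prob_space_measure_pmf)
  also have "\<dots> = ennreal (p ^ card S)"
    using assms by (simp add: emeasure_pmf_single prod_ennreal[symmetric] ennreal_power)
  finally have "measure (fp_space p) E = p ^ card S"
    using assms by (simp add: measure_def)
  then show "integrable (fp_space p) (\<lambda>\<omega>. of_bool (\<forall>s\<in>S. \<omega> s) :: real)"
    and "(\<integral>\<omega>. of_bool (\<forall>s\<in>S. \<omega> s) \<partial>fp_space p) = p ^ card S"
    using E_sets by (simp_all add: of_bool_eq integrable_indicator_iff emeasure_eq_measure)
qed

lemma components_eq_closed_partition:
  assumes "finite F" and "\<And>C. C \<in> F \<Longrightarrow> closed C \<and> connected C \<and> C \<noteq> {}"
    and "pairwise disjnt F"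
  shows "components (\<Union>F) = F"
proof -
  have into_member: "K \<subseteq> C" if "connected K" "K \<subseteq> \<Union>F" "C \<in> F" "K \<inter> C \<noteq> {}" for K C
  proof -
    have closed_rest: "closed (\<Union>(F - {C}))"
      using assms(1,2) by (intro closed_Union) auto
    have disjoint: "C \<inter> \<Union>(F - {C}) \<inter> K = {}"
      using assms(3) that(3) unfolding pairwise_def disjnt_def by blast
    have cover: "K \<subseteq> C \<union> \<Union>(F - {C})"
      using that(2) by blast
    have "C \<inter> K = {} \<or> \<Union>(F - {C}) \<inter> K = {}"
      using connected_closedD[OF that(1) disjoint cover] closed_rest assms(2)[OF that(3)] by blast
    then show ?thesis
      using that(4) cover by blast
  qed
  show ?thesis
  proof (intro equalityI subsetI)
    fix K assume K: "K \<in> components (\<Union>F)"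
    then obtain x C where "x \<in> K" "x \<in> C" "C \<in> F"
      using in_components_nonempty in_components_subset by blast
    then have "K \<subseteq> C" and "C \<subseteq> K"
      using into_member[of K C] components_maximal[OF K, of C] assms(2) K
        in_components_connected in_components_subset by blast+
    then show "K \<in> F" using \<open>C \<in> F\<close> by simp
  next
    fix C assume "C \<in> F"
    then obtain K where K: "K \<in> components (\<Union>F)" "C \<subseteq> K"
      using exists_component_superset[of C "\<Union>F"] assms(2) by blast
    then have "K \<subseteq> C"
      using into_member[of K C] \<open>C \<in> F\<close> assms(2) in_components_connected in_components_subset
      by blast
    then show "C \<in> components (\<Union>F)" using K by simp
  qed
qed

lemma card_components_Un_disjoint:
  assumes "closed S" and "finite (components S)"
    and "closed T" and "connected T" and "T \<noteq> {}" and "S \<inter> T = {}"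
  shows "finite (components (S \<union> T)) \<and> card (components (S \<union> T)) = Suc (card (components S))"
proof -
  let ?F = "insert T (components S)"
  have "components (\<Union>?F) = ?F"
  proof (rule components_eq_closed_partition)
    show "pairwise disjnt ?F"
      using assms(6) pairwise_disjoint_components[of S] in_components_subset[of _ S]
      unfolding pairwise_def disjnt_def by blast
    show "closed D \<and> connected D \<and> D \<noteq> {}" if "D \<in> ?F" for D
      using that assms closed_components[of S D] in_components_connected[of D S]
        in_components_nonempty[of D S] by auto
  qed (use assms(2) in simp)
  moreover have "\<Union>?F = S \<union> T"
    by auto
  moreover have "T \<notin> components S"
    using assms(5,6) in_components_subset by blast
  ultimately show ?thesis
    using assms(2) by simp
qed

lemma card_components_Un_touching:
  assumes "closed S" and "finite (components S)"
    and "closed T" and "connected T" and "S \<inter> T = {x}"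
  shows "finite (components (S \<union> T)) \<and> card (components (S \<union> T)) = card (components S)"
proof -
  define C where "C = connected_component_set S x"
  have "x \<in> S"
    using assms(5) by blast
  then have C: "C \<in> components S" "x \<in> C"
    by (auto simp: C_def componentsI connected_component_refl)
  let ?F = "insert (C \<union> T) (components S - {C})"
  have "components (\<Union>?F) = ?F"
  proof (rule components_eq_closed_partition)
    have "C' \<inter> (C \<union> T) = {}" if "C' \<in> components S" "C' \<noteq> C" for C'
    proof -
      have "C' \<inter> C = {}"
        using components_nonoverlap[OF that(1) C(1)] that(2) by blast
      moreover have "C' \<inter> T \<subseteq> {x}"
        using in_components_subset[OF that(1)] assms(5) by blast
      ultimately show ?thesis
        using C(2) by blast
    qed
    then show "pairwise disjnt ?F"
      using pairwise_disjoint_components[of S]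
      unfolding pairwise_def disjnt_def by (metis Diff_iff Int_commute insert_iff)
    show "closed D \<and> connected D \<and> D \<noteq> {}" if "D \<in> ?F" for D
      using that C assms closed_components[OF assms(1)] in_components_connected[of _ S]
        in_components_nonempty[of _ S] by (auto intro!: connected_Un)
  qed (use assms(2) in simp)
  moreover have "\<Union>?F = S \<union> T"
    using C(1) Union_components[of S] by blast
  moreover have "C \<union> T \<notin> components S - {C}"
    using C components_nonoverlap by blast
  moreover have "card (components S) > 0"
    using assms(2) C(1) card_gt_0_iff by blast
  ultimately show ?thesis
    using assms(2) C(1) by simp
qed

definition cell :: "real \<Rightarrow> nat \<Rightarrow> real set" where
  "cell h i = {real i * h .. real (Suc i) * h}"

definition cells :: "real \<Rightarrow> (nat \<Rightarrow> bool) \<Rightarrow> nat \<Rightarrow> real set" where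
  "cells h P N = (\<Union>i\<in>{i. i < N \<and> P i}. cell h i)"

lemma cells_0 [simp]: "cells h P 0 = {}"
  by (simp add: cells_def)

lemma cells_Suc: "cells h P (Suc N) = (if P N then cells h P N \<union> cell h N else cells h P N)"
  unfolding cells_def by (auto simp: less_Suc_eq)

lemma compact_cells: "compact (cells h P N)"
  unfolding cells_def cell_def by (intro compact_UN) auto

lemma cells_Int_cell:
  assumes "h > 0"
  shows "cells h P N \<inter> cell h N = (if 0 < N \<and> P (N - 1) then {real N * h} else {})"
proof -
  have "x \<le> real N * h" if "x \<in> cells h P N" for x
  proof -
    obtain i where "i < N" "x \<le> real (Suc i) * h"
      using \<open>x \<in> cells h P N\<close> by (auto simp: cells_def cell_def)
    then show ?thesis
      using assms by (smt (verit) mult_right_mono of_nat_less_iff Suc_leI of_nat_le_iff)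
  qed
  then have at_most_corner: "cells h P N \<inter> cell h N \<subseteq> {real N * h}"
    by (fastforce simp: cell_def)
  have corner_iff: "real N * h \<in> cells h P N \<longleftrightarrow> 0 < N \<and> P (N - 1)"
  proof
    assume "real N * h \<in> cells h P N"
    then obtain i where "i < N" "P i" "real N * h \<le> real (Suc i) * h"
      by (auto simp: cells_def cell_def)
    then have "i = N - 1" using assms by simp
    then show "0 < N \<and> P (N - 1)" using \<open>i < N\<close> \<open>P i\<close> by simp
  next
    assume "0 < N \<and> P (N - 1)"
    moreover have "real N * h \<in> cell h (N - 1)" if "0 < N"
      using that assms by (auto simp: cell_def of_nat_diff algebra_simps)
    ultimately show "real N * h \<in> cells h P N"
      unfolding cells_def by (intro UN_I[of "N - 1"]) auto
  qed
  have "real N * h \<in> cell h N"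
    using assms by (simp add: cell_def)
  then show ?thesis
    using at_most_corner corner_iff by auto
qed

lemma measure_cells:
  assumes "h > 0"
  shows "measure lborel (cells h P N) = h * (\<Sum>i<N. of_bool (P i))"
proof (induction N)
  case (Suc N)
  have "AE x in lborel. x \<notin> cells h P N \<inter> cell h N"
    using cells_Int_cell[OF assms, of P N]
    by (intro AE_I'[OF finite_imp_null_set_lborel[of "{real N * h}"]]) (auto split: if_splits)
  then have "measure lborel (cells h P N \<union> cell h N) = measure lborel (cells h P N) + h"
    using assms
    by (subst measure_Un_AE) (auto intro!: fmeasurable_compact compact_cells simp: cell_def algebra_simps)
  with Suc.IH show ?case
    by (simp add: cells_Suc algebra_simps)
qed simp

lemma card_components_cells:
  assumes "h > 0"
  shows "finite (components (cells h P N)) \<and>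
    real (card (components (cells h P N))) = (\<Sum>i<N. of_bool (P i) - of_bool (0 < i \<and> P (i - 1) \<and> P i))"
proof (induction N)
  case (Suc N)
  let ?new = "of_bool (P N) - of_bool (0 < N \<and> P (N - 1) \<and> P N) :: real"
  have cell: "closed (cell h N)" "connected (cell h N)" "cell h N \<noteq> {}"
    using assms by (auto simp: cell_def)
  have closed: "closed (cells h P N)"
    by (simp add: compact_cells compact_imp_closed)
  have finite: "finite (components (cells h P N))"
    using Suc.IH by blast
  have "finite (components (cells h P (Suc N))) \<and>
    real (card (components (cells h P (Suc N)))) = real (card (components (cells h P N))) + ?new"
  proof (cases "P N")
    case False
    then show ?thesis using finite by (simp add: cells_Suc)
  next
    case True
    show ?thesis
    proof (cases "0 < N \<and> P (N - 1)")
      case touching: True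
      then have "cells h P N \<inter> cell h N = {real N * h}"
        using cells_Int_cell[OF assms] by simp
      with card_components_Un_touching[OF closed finite cell(1,2)] show ?thesis
        using True touching by (simp add: cells_Suc)
    next
      case disjoint: False
      then have "cells h P N \<inter> cell h N = {}"
        using cells_Int_cell[OF assms] by simp
      with card_components_Un_disjoint[OF closed finite cell] show ?thesis
        using True disjoint by (simp add: cells_Suc)
    qed
  qed
  moreover have "(\<Sum>i<Suc N. of_bool (P i) - of_bool (0 < i \<and> P (i - 1) \<and> P i)) =
      (\<Sum>i<N. of_bool (P i) - of_bool (0 < i \<and> P (i - 1) \<and> P i)) + ?new"
    by (rule sum.lessThan_Suc)
  ultimately show ?case
    using Suc.IH by linarith
qed simp

fun word_index :: "nat \<Rightarrow> nat list \<Rightarrow> nat" where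
  "word_index M [] = 0"
| "word_index M (d # ds) = d * M ^ length ds + word_index M ds"

fun index_word :: "nat \<Rightarrow> nat \<Rightarrow> nat \<Rightarrow> nat list" where
  "index_word M 0 i = []"
| "index_word M (Suc n) i = i div M ^ n # index_word M n (i mod M ^ n)"

lemma length_index_word [simp]: "length (index_word M n i) = n"
  by (induction n arbitrary: i) auto

lemma index_word_leading_digit:
  assumes "r < M ^ n"
  shows "index_word M (Suc n) (j * M ^ n + r) = j # index_word M n r"
proof -
  have "M ^ n \<noteq> 0"
    using assms by (metis less_nat_zero_code)
  then have "(r + j * M ^ n) div M ^ n = j"
    using assms by (subst div_mult_self1) auto
  then show ?thesis
    using assms by (simp add: add.commute)
qed

lemma set_index_word: "i < M ^ n \<Longrightarrow> set (index_word M n i) \<subseteq> {..<M}"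
proof (induction n arbitrary: i)
  case (Suc n)
  then have "i div M ^ n < M"
    by (simp add: less_mult_imp_div_less mult.commute)
  moreover have "i mod M ^ n < M ^ n"
    using Suc.prems by (cases "M = 0") auto
  ultimately show ?case
    using Suc.IH by simp
qed simp

lemma word_index_less: "set ds \<subseteq> {..<M} \<Longrightarrow> word_index M ds < M ^ length ds"
proof (induction ds)
  case (Cons d ds)
  then have "d * M ^ length ds + word_index M ds < (d + 1) * M ^ length ds"
    by simp
  also have "\<dots> \<le> M * M ^ length ds"
    using Cons.prems by (intro mult_right_mono) auto
  finally show ?case
    by simp
qed simp

lemma index_word_word_index: "set ds \<subseteq> {..<M} \<Longrightarrow> index_word M (length ds) (word_index M ds) = ds"
proof (induction ds)
  case (Cons d ds)
  then have "word_index M ds < M ^ length ds"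
    using word_index_less by simp
  with Cons show ?case
    by simp
qed simp

lemma word_index_index_word: "i < M ^ n \<Longrightarrow> word_index M (index_word M n i) = i"
proof (induction n arbitrary: i)
  case (Suc n)
  then have "M ^ n \<noteq> 0"
    by (cases M) auto
  with Suc.IH have "word_index M (index_word M (Suc n) i) = i div M ^ n * M ^ n + i mod M ^ n"
    by simp
  then show ?case
    unfolding div_mult_mod_eq .
qed simp

lemma fp_words_eq_image: "fp_words M n = index_word M n ` {..<M ^ n}"
proof (intro equalityI subsetI)
  fix ds assume "ds \<in> fp_words M n"
  then have digits: "set ds \<subseteq> {..<M}" and length: "length ds = n"
    by (simp_all add: fp_words_def)
  have "word_index M ds \<in> {..<M ^ n}"
    using word_index_less[OF digits] length by simp
  moreover have "ds = index_word M n (word_index M ds)"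
    using index_word_word_index[OF digits] length by simp
  ultimately show "ds \<in> index_word M n ` {..<M ^ n}"
    by (rule rev_image_eqI)
qed (use set_index_word in \<open>auto simp: fp_words_def\<close>)

lemma fp_left_eq_word_index: "M > 0 \<Longrightarrow> fp_left M ds = real (word_index M ds) / real M ^ length ds"
proof (induction ds)
  case (Cons d ds)
  have "fp_left M (d # ds) = (real d + fp_left M ds) / real M"
    unfolding fp_left_def
    by (simp add: sum.lessThan_Suc_shift sum_divide_distrib add_divide_distrib mult_ac del: sum.lessThan_Suc)
  also have "\<dots> = (real d + real (word_index M ds) / real M ^ length ds) / real M"
    using Cons by simp
  finally show ?case
    using Cons.prems by (simp add: field_simps)
qed (simp add: fp_left_def)

lemma fp_cell_index_word:
  "M > 0 \<Longrightarrow> i < M ^ n \<Longrightarrow> fp_cell M (index_word M n i) = cell (1 / real M ^ n) i"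
  by (simp add: fp_cell_def cell_def fp_left_eq_word_index word_index_index_word field_simps)

lemma fp_K_eq_cells:
  assumes "M > 0"
  shows "fp_K M \<omega> n = cells (1 / real M ^ n) (\<lambda>i. fp_kept \<omega> (index_word M n i)) (M ^ n)"
  unfolding fp_K_def cells_def fp_words_eq_image
  using fp_cell_index_word[OF assms] by auto

definition nonempty_prefixes :: "'a list \<Rightarrow> 'a list set" where
  "nonempty_prefixes xs = (\<lambda>k. take k xs) ` {1..length xs}"

lemma fp_kept_iff_nonempty_prefixes: "fp_kept \<omega> ds \<longleftrightarrow> (\<forall>s\<in>nonempty_prefixes ds. \<omega> s)"
  unfolding fp_kept_def nonempty_prefixes_def by auto

lemma finite_nonempty_prefixes [simp]: "finite (nonempty_prefixes xs)"
  by (simp add: nonempty_prefixes_def)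

lemma card_nonempty_prefixes [simp]: "card (nonempty_prefixes xs) = length xs"
proof -
  have "inj_on (\<lambda>k. take k xs) {1..length xs}"
    by (rule inj_onI) (metis atLeastAtMost_iff length_take min.absorb2)
  then show ?thesis
    by (simp add: nonempty_prefixes_def card_image)
qed

lemma nonempty_prefixes_Cons: "nonempty_prefixes (x # xs) = insert [x] (Cons x ` nonempty_prefixes xs)"
proof -
  have indices: "{1..Suc (length xs)} = insert 1 (Suc ` {1..length xs})"
    by (auto simp: image_iff)
  have "nonempty_prefixes (x # xs) = insert (take 1 (x # xs)) ((\<lambda>k. take (Suc k) (x # xs)) ` {1..length xs})"
    unfolding nonempty_prefixes_def length_Cons indices image_insert image_image by (rule refl)
  then show ?thesis
    unfolding nonempty_prefixes_def take_Suc_Cons image_image by simp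
qed

lemma Nil_notin_nonempty_prefixes: "[] \<notin> nonempty_prefixes xs"
  by (auto simp: nonempty_prefixes_def)

definition cell_coins :: "nat \<Rightarrow> nat \<Rightarrow> nat \<Rightarrow> nat list set" where
  "cell_coins M n i = nonempty_prefixes (index_word M n i)"

lemma card_adjacent_cell_coins_inner:
  assumes "0 < r" and "r < M ^ n"
  shows "card (cell_coins M (Suc n) (j * M ^ n + r - 1) \<union> cell_coins M (Suc n) (j * M ^ n + r))
       = Suc (card (cell_coins M n (r - 1) \<union> cell_coins M n r))"
proof -
  let ?X = "cell_coins M n (r - 1) \<union> cell_coins M n r"
  have "j * M ^ n + r - 1 = j * M ^ n + (r - 1)"
    using assms by simp
  then have "cell_coins M (Suc n) (j * M ^ n + r - 1) \<union> cell_coins M (Suc n) (j * M ^ n + r)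
      = insert [j] (Cons j ` ?X)"
    using assms index_word_leading_digit[of r M n j] index_word_leading_digit[of "r - 1" M n j]
    by (simp add: cell_coins_def nonempty_prefixes_Cons image_Un del: index_word.simps)
  moreover have "[j] \<notin> Cons j ` ?X"
    using Nil_notin_nonempty_prefixes by (auto simp: cell_coins_def)
  ultimately show ?thesis
    by (simp add: cell_coins_def card_image)
qed

lemma card_adjacent_cell_coins_block_boundary:
  assumes "0 < j" and "0 < M"
  shows "card (cell_coins M (Suc n) (j * M ^ n - 1) \<union> cell_coins M (Suc n) (j * M ^ n)) = 2 * Suc n"
proof -
  have last_of_block: "j * M ^ n - 1 = (j - 1) * M ^ n + (M ^ n - 1)"
    using assms by (cases j) (auto simp: algebra_simps)
  have left: "cell_coins M (Suc n) (j * M ^ n - 1) = nonempty_prefixes ((j - 1) # index_word M n (M ^ n - 1))"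
    unfolding cell_coins_def last_of_block using assms by (subst index_word_leading_digit) simp_all
  have right: "cell_coins M (Suc n) (j * M ^ n) = nonempty_prefixes (j # index_word M n 0)"
    using assms index_word_leading_digit[of 0 M n j] by (simp add: cell_coins_def del: index_word.simps)
  have "nonempty_prefixes ((j - 1) # index_word M n (M ^ n - 1)) \<inter> nonempty_prefixes (j # index_word M n 0) = {}"
    unfolding nonempty_prefixes_Cons using assms(1) by auto
  then show ?thesis
    unfolding left right by (simp add: card_Un_disjoint)
qed

text \<open>The expected number of pairs of adjacent kept cells of level n.\<close>
definition adjacent_weight :: "nat \<Rightarrow> real \<Rightarrow> nat \<Rightarrow> real" where
  "adjacent_weight M p n =
     (\<Sum>i<M ^ n. if i = 0 then 0 else p ^ card (cell_coins M n (i - 1) \<union> cell_coins M n i))"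

lemma sum_lessThan_mult_split:
  fixes f :: "nat \<Rightarrow> 'a::comm_monoid_add"
  shows "(\<Sum>i<m * k. f i) = (\<Sum>j<m. \<Sum>r<k. f (j * k + r))"
  unfolding sum.nat_group[where k = k and n = m, symmetric]
  by (simp add: sum.atLeastLessThan_shift_0[of _ "_ * k"] atLeast0LessThan)

lemma sum_lessThan_if_eq_0_const: "0 < m \<Longrightarrow> (\<Sum>j<m. if j = 0 then 0 else c) = (real m - 1) * c"
  by (induction m) (auto simp: algebra_simps)

lemma adjacent_weight_Suc:
  assumes "M > 0"
  shows "adjacent_weight M p (Suc n) = real M * p * adjacent_weight M p n + (real M - 1) * p ^ (2 * Suc n)"
proof -
  let ?w = "\<lambda>n i. if i = 0 then 0 else p ^ card (cell_coins M n (i - 1) \<union> cell_coins M n i)"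
  have block: "(\<Sum>r<M ^ n. ?w (Suc n) (j * M ^ n + r))
      = (if j = 0 then 0 else p ^ (2 * Suc n)) + p * adjacent_weight M p n" for j
  proof -
    have "?w (Suc n) (j * M ^ n + r) = (if r = 0 then ?w (Suc n) (j * M ^ n) else 0) + p * ?w n r"
      if "r < M ^ n" for r
      using that card_adjacent_cell_coins_inner[of r M n j] by auto
    then have "(\<Sum>r<M ^ n. ?w (Suc n) (j * M ^ n + r)) = ?w (Suc n) (j * M ^ n) + p * adjacent_weight M p n"
      using assms by (simp add: sum.distrib sum_distrib_left adjacent_weight_def)
    then show ?thesis
      using assms card_adjacent_cell_coins_block_boundary[of j M n] by auto
  qed
  have "adjacent_weight M p (Suc n) = (\<Sum>j<M. \<Sum>r<M ^ n. ?w (Suc n) (j * M ^ n + r))"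
    unfolding adjacent_weight_def power_Suc by (rule sum_lessThan_mult_split)
  also have "\<dots> = (\<Sum>j<M. (if j = 0 then 0 else p ^ (2 * Suc n)) + p * adjacent_weight M p n)"
    by (simp only: block)
  also have "\<dots> = (real M - 1) * p ^ (2 * Suc n) + real M * (p * adjacent_weight M p n)"
    using assms by (simp add: sum.distrib sum_lessThan_if_eq_0_const del: power_Suc)
  finally show ?thesis
    by (simp add: algebra_simps)
qed

lemma adjacent_weight_closed_form:
  assumes "M > 0"
  shows "adjacent_weight M p n = (real M * p) ^ n * (real M - 1) * (\<Sum>j<n. (p / real M) ^ Suc j)"
proof (induction n)
  case (Suc n)
  have "real M * p * (p / real M) = p ^ 2"
    using assms by (simp add: power2_eq_square)
  then have squares: "(real M * p) ^ Suc n * (p / real M) ^ Suc n = p ^ (2 * Suc n)"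
    by (simp only: power_mult_distrib[symmetric] power_mult)
  have "adjacent_weight M p (Suc n) = real M * p * ((real M * p) ^ n * (real M - 1) * (\<Sum>j<n. (p / real M) ^ Suc j))
      + (real M - 1) * ((real M * p) ^ Suc n * (p / real M) ^ Suc n)"
    by (simp only: adjacent_weight_Suc[OF assms] Suc.IH squares)
  also have "\<dots> = (real M * p) ^ Suc n * (real M - 1) * (\<Sum>j<Suc n. (p / real M) ^ Suc j)"
    by (simp only: sum.lessThan_Suc power_Suc) (simp add: algebra_simps)
  finally show ?case .
qed (simp add: adjacent_weight_def)

lemma V1_fp_K:
  assumes "M > 0"
  shows "V1 (fp_K M \<omega> n) = (\<Sum>i<M ^ n. of_bool (\<forall>s\<in>cell_coins M n i. \<omega> s)) / real M ^ n"
  using assms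
  by (simp add: V1_def fp_K_eq_cells measure_cells cell_coins_def fp_kept_iff_nonempty_prefixes)

lemma V0_fp_K:
  assumes "M > 0"
  shows "V0 (fp_K M \<omega> n) = (\<Sum>i<M ^ n. of_bool (\<forall>s\<in>cell_coins M n i. \<omega> s)
      - (if i = 0 then 0 else of_bool (\<forall>s\<in>cell_coins M n (i - 1) \<union> cell_coins M n i. \<omega> s)))"
proof -
  let ?kept = "\<lambda>i. fp_kept \<omega> (index_word M n i)"
  have "V0 (fp_K M \<omega> n) = (\<Sum>i<M ^ n. of_bool (?kept i) - of_bool (0 < i \<and> ?kept (i - 1) \<and> ?kept i))"
    using assms card_components_cells[of "1 / real M ^ n" ?kept "M ^ n"]
    by (simp add: V0_def fp_K_eq_cells)
  also have "\<dots> = (\<Sum>i<M ^ n. of_bool (\<forall>s\<in>cell_coins M n i. \<omega> s)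
      - (if i = 0 then 0 else of_bool (\<forall>s\<in>cell_coins M n (i - 1) \<union> cell_coins M n i. \<omega> s)))"
    by (intro sum.cong) (auto simp: cell_coins_def fp_kept_iff_nonempty_prefixes)
  finally show ?thesis .
qed

lemma expectation_V1_fp_K:
  assumes "M > 0" and "0 \<le> p" and "p \<le> 1"
  shows "(\<integral>\<omega>. V1 (fp_K M \<omega> n) \<partial>fp_space p) = p ^ n"
  using assms
  by (simp add: V1_fp_K cell_coins_def integrable_all_coins integral_all_coins del: sum_of_bool_eq)

lemma expectation_V0_fp_K:
  assumes "M > 0" and "0 \<le> p" and "p \<le> 1"
  shows "(\<integral>\<omega>. V0 (fp_K M \<omega> n) \<partial>fp_space p) = (real M * p) ^ n - adjacent_weight M p n"
proof -
  let ?pair = "\<lambda>i. cell_coins M n (i - 1) \<union> cell_coins M n i"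
  let ?term = "\<lambda>i \<omega>. of_bool (\<forall>s\<in>cell_coins M n i. \<omega> s)
      - (if i = 0 then 0 else of_bool (\<forall>s\<in>?pair i. \<omega> s)) :: real"
  have finite: "finite (cell_coins M n i)" for i
    by (simp add: cell_coins_def)
  have card: "card (cell_coins M n i) = n" for i
    by (simp add: cell_coins_def)
  have "integrable (fp_space p) (?term i) \<and>
      (\<integral>\<omega>. ?term i \<omega> \<partial>fp_space p) = p ^ n - (if i = 0 then 0 else p ^ card (?pair i))" for i
    using assms finite[of i] finite[of "i - 1"] card[of i]
    by (cases "i = 0") (simp_all add: integrable_all_coins integral_all_coins)
  then have "(\<integral>\<omega>. (\<Sum>i<M ^ n. ?term i \<omega>) \<partial>fp_space p)
      = (\<Sum>i<M ^ n. p ^ n - (if i = 0 then 0 else p ^ card (?pair i)))"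
    by (simp add: Bochner_Integration.integral_sum)
  then show ?thesis
    using assms by (simp add: V0_fp_K adjacent_weight_def sum_subtractf power_mult_distrib)
qed

lemma powr_fp_scaling:
  fixes M p k :: real
  assumes "M > 1" and "p > 0"
  shows "(1 / M) powr (real n * (ln (M * p) / ln M - k)) = (M powr k / (M * p)) ^ n"
proof -
  have "(1 / M) powr (real n * (ln (M * p) / ln M - k)) = exp (real n * (k * ln M - ln (M * p)))"
    using assms by (simp add: powr_def ln_div field_simps)
  also have "\<dots> = exp (ln (M powr k / (M * p))) ^ n"
    using assms by (simp add: exp_of_nat_mult[symmetric] ln_div ln_powr)
  also have "\<dots> = (M powr k / (M * p)) ^ n"
    using assms by simp
  finally show ?thesis .
qed

lemma tendsto_normalized_expectation_V0_fp_K: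
  assumes "M \<ge> 2" and "0 < p" and "p \<le> 1"
  shows "(\<lambda>n. (\<integral>\<omega>. V0 (fp_K M \<omega> n) \<partial>fp_space p) / (real M * p) ^ n)
    \<longlonglongrightarrow> real M * (1 - p) / (real M - p)"
proof -
  define q where "q = p / real M"
  have q: "norm q < 1"
    using assms by (simp add: q_def abs_if field_simps)
  have "(\<integral>\<omega>. V0 (fp_K M \<omega> n) \<partial>fp_space p) / (real M * p) ^ n
      = 1 - (real M - 1) * (\<Sum>j<n. q ^ Suc j)" for n
    using assms
    by (simp add: expectation_V0_fp_K adjacent_weight_closed_form q_def field_simps)
  moreover have "(\<lambda>n. 1 - (real M - 1) * (\<Sum>j<n. q ^ Suc j)) \<longlonglongrightarrow> 1 - (real M - 1) * (q / (1 - q))"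
    using sums_mult[OF geometric_sums[OF q], of q]
    by (intro tendsto_intros) (simp add: sums_def)
  moreover have "1 - (real M - 1) * (q / (1 - q)) = real M * (1 - p) / (real M - p)"
    using assms by (simp add: q_def field_simps)
  ultimately show ?thesis
    by simp
qed

theorem corollary4p3:
  fixes M :: nat and p :: real
  assumes "M \<ge> 2" and "0 < p" and "p \<le> 1"
  defines "D \<equiv> ln (real M * p) / ln (real M)"
  defines "r \<equiv> 1 / real M"
  shows "((\<lambda>n. r powr (real n * (D - 1)) *
            (\<integral>\<omega>. V1 (fp_K M \<omega> n) \<partial>fp_space p)) \<longlonglongrightarrow> 1) \<and>
         ((\<lambda>n. r powr (real n * (D - 0)) *
            (\<integral>\<omega>. V0 (fp_K M \<omega> n) \<partial>fp_space p))
           \<longlonglongrightarrow> real M * (1 - p) / (real M - p))"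
proof
  have M: "real M > 1"
    using assms(1) by simp
  have "r powr (real n * (D - 1)) * (\<integral>\<omega>. V1 (fp_K M \<omega> n) \<partial>fp_space p) = 1" for n
    using assms powr_fp_scaling[OF M \<open>0 < p\<close>, of n 1]
    by (simp add: r_def D_def expectation_V1_fp_K power_divide)
  then show "(\<lambda>n. r powr (real n * (D - 1)) * (\<integral>\<omega>. V1 (fp_K M \<omega> n) \<partial>fp_space p)) \<longlonglongrightarrow> 1"
    by simp
  have "r powr (real n * (D - 0)) * (\<integral>\<omega>. V0 (fp_K M \<omega> n) \<partial>fp_space p)
      = (\<integral>\<omega>. V0 (fp_K M \<omega> n) \<partial>fp_space p) / (real M * p) ^ n" for n
    using M powr_fp_scaling[OF M \<open>0 < p\<close>, of n 0] by (simp add: r_def D_def power_one_over)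
  then show "(\<lambda>n. r powr (real n * (D - 0)) * (\<integral>\<omega>. V0 (fp_K M \<omega> n) \<partial>fp_space p))
      \<longlonglongrightarrow> real M * (1 - p) / (real M - p)"
    using tendsto_normalized_expectation_V0_fp_K[OF assms(1-3)] by simp
qed

end
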